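(* Let $\mu$ be a probability measure on $\mathrm{Homeo}_+(\mathbb{R})$ with finite or countable support having the shiftability property. Then for every $x\in\mathbb{R}$, almost surely both $\limsup_{n\to\infty}F_n(x)$ and $\liminf_{n\to\infty}F_n(x)$ belong to $\{-\infty,+\infty\}$.
   Context: Setup. Let $\mu$ be a probability measure on the group $\mathrm{Homeo}_+(\mathbb{R})$ of orientation-preserving homeomorphisms of $\mathbb{R}$, supported on a finite or countable set $\{f_1,f_2,\dots\}$ with $p_i=\mu(\{f_i\})>0$, $\sum_i p_i=1$. Let $g_1,g_2,\dots$ be i.i.d. random maps with law $\mu$, and set $F_0=\mathrm{id}$, $F_n=g_n\circ\cdots\circ g_1$. The system has the shiftability property if for every $x\in\mathbb{R}$ there exist $f,g$ with $\mu(\{f\})>0$, $\mu(\{g\})>0$ and $g(x)<x<f(x)$. *)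

theory Defs
  imports "HOL-Probability.Probability"
begin

definition homeo_plus :: "(real \<Rightarrow> real) \<Rightarrow> bool" where
  "homeo_plus f \<longleftrightarrow> (\<exists>g. homeomorphism UNIV UNIV f g) \<and> strict_mono f"

definition shiftable :: "(real \<Rightarrow> real) pmf \<Rightarrow> bool" where
  "shiftable \<mu> \<longleftrightarrow> (\<forall>x. \<exists>f\<in>set_pmf \<mu>. \<exists>g\<in>set_pmf \<mu>. g x < x \<and> x < f x)"

text \<open>Random walk: F_0 = id and F_n = g_n o ... o g_1, where the stream
  omega = g_1, g_2, ... is the i.i.d. sequence of maps.\<close>
definition walk :: "nat \<Rightarrow> (real \<Rightarrow> real) stream \<Rightarrow> real \<Rightarrow> real" where
  "walk n \<omega> = fold (\<lambda>g h. g \<circ> h) (stake n \<omega>) id"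

end

theory Submission
  imports Defs
begin

text \<open>
  If the limit superior of \<open>F\<^sub>n(x)\<close> is finite, then for some integers \<open>lo < c\<close> the orbit
  eventually stays below \<open>c\<close> while returning infinitely often to the window \<open>[lo, c]\<close>; for
  the limit inferior the same holds after a change of sign. There are countably many such
  trap events, and each of them is null. Indeed, on the compact window the shiftability
  property is uniform: some map of probability at least \<open>\<delta>\<close> moves every point of the
  window up by at least \<open>\<epsilon>\<close>. Let \<open>h(y)\<close> be the probability of the trap event for the walk
  started at \<open>y\<close>; it is subharmonic below \<open>c\<close> and vanishes above \<open>c\<close>. From the window, \<open>N\<close>
  consecutive pushes leave \<open>(-\<infinity>, c]\<close>, so \<open>h \<le> (1 - \<delta>\<^sup>N) sup h\<close> on the window, and since
  the trap event forces a visit to the window, the same bound holds everywhere. Hence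
  \<open>sup h = 0\<close>.
\<close>

lemma INFM_Suc_iff: "(\<exists>\<^sub>\<infinity>n. P (Suc n)) \<longleftrightarrow> (\<exists>\<^sub>\<infinity>n. P n)"
  unfolding frequently_def MOST_Suc_iff[of "\<lambda>n. \<not> P n"] ..

lemma all_ge_Suc_iff: "(\<forall>n\<ge>Suc m. P n) \<longleftrightarrow> (\<forall>n\<ge>m. P (Suc n))"
  by (metis Suc_le_D Suc_le_mono)

lemma all_nat_iff_0_Suc: "(\<forall>n::nat. P n) \<longleftrightarrow> P 0 \<and> (\<forall>n. P (Suc n))"
  by (metis nat.exhaust)

lemma integrable_pmf_bounded:
  fixes \<psi> :: "'a \<Rightarrow> real" and \<mu> :: "'a pmf"
  assumes "\<And>g. 0 \<le> \<psi> g" and "\<And>g. \<psi> g \<le> B"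
  shows "integrable \<mu> \<psi>"
  by (rule measure_pmf.integrable_const_bound[where B=B]) (use assms in auto)

lemma integral_pmf_le_point:
  fixes \<psi> :: "'a \<Rightarrow> real" and \<mu> :: "'a pmf"
  assumes "\<And>g. 0 \<le> \<psi> g" and "\<And>g. \<psi> g \<le> B" and "\<psi> f \<le> a"
  shows "(\<integral>g. \<psi> g \<partial>\<mu>) \<le> B - (B - a) * pmf \<mu> f"
proof -
  have indicator: "integrable \<mu> (\<lambda>g. indicator {f} g :: real)"
    by (rule integrable_pmf_bounded[where B=1]) (auto split: split_indicator)
  have "(\<integral>g. \<psi> g \<partial>\<mu>) \<le> (\<integral>g. B - (B - a) * indicator {f} g \<partial>\<mu>)"
    using assms
    by (intro integral_mono integrable_pmf_bounded[where B=B] Bochner_Integration.integrable_diff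
        measure_pmf.integrable_const integrable_mult_right indicator)
      (auto split: split_indicator)
  also have "\<dots> = B - (B - a) * pmf \<mu> f"
    using indicator by (simp add: measure_pmf_single)
  finally show ?thesis .
qed

lemma measure_stream_space_Cons:
  fixes \<mu> :: "'a pmf"
  assumes "A \<in> sets (stream_space (measure_pmf \<mu>))"
  shows "measure (stream_space (measure_pmf \<mu>)) A =
    (\<integral>g. measure (stream_space (measure_pmf \<mu>)) {\<omega>. g ## \<omega> \<in> A} \<partial>\<mu>)"
proof -
  interpret S: prob_space "stream_space (measure_pmf \<mu>)"
    by (rule prob_space.prob_space_stream_space[OF prob_space_measure_pmf])
  have "ennreal (measure (stream_space (measure_pmf \<mu>)) A) =
      (\<integral>\<^sup>+g. ennreal (measure (stream_space (measure_pmf \<mu>)) {\<omega>. g ## \<omega> \<in> A}) \<partial>\<mu>)"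
    using prob_space.prob_stream_space[OF prob_space_measure_pmf, where P="\<lambda>\<omega>. \<omega> \<in> A"] assms
    by (simp add: space_stream_space)
  also have "\<dots> = ennreal (\<integral>g. measure (stream_space (measure_pmf \<mu>)) {\<omega>. g ## \<omega> \<in> A} \<partial>\<mu>)"
    by (rule nn_integral_eq_integral) (auto intro!: measure_pmf.integrable_const_bound[where B=1])
  finally show ?thesis
    by (subst (asm) ennreal_inj) (auto intro!: integral_nonneg_AE)
qed

section \<open>Subharmonic functions trapped below a level\<close>

definition uniform_push ::
    "('a \<Rightarrow> 'a) pmf \<Rightarrow> ('a \<Rightarrow> real) \<Rightarrow> 'a set \<Rightarrow> real \<Rightarrow> real \<Rightarrow> bool"
  where "uniform_push \<mu> \<phi> K \<delta> \<epsilon> \<longleftrightarrow> (\<forall>y\<in>K. \<exists>f\<in>set_pmf \<mu>. \<delta> \<le> pmf \<mu> f \<and> \<phi> y + \<epsilon> < \<phi> (f y))"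

locale subharmonic_trap =
  fixes \<mu> :: "('a \<Rightarrow> 'a) pmf" and \<phi> :: "'a \<Rightarrow> real" and c :: real and h :: "'a \<Rightarrow> real"
  assumes nonneg: "0 \<le> h y"
    and le_1: "h y \<le> 1"
    and vanish: "c < \<phi> y \<Longrightarrow> h y = 0"
    and subharmonic: "\<phi> y \<le> c \<Longrightarrow> h y \<le> (\<integral>g. h (g y) \<partial>\<mu>)"
begin

lemma pushed_bound:
  assumes bound: "\<And>y. h y \<le> H"
    and push: "uniform_push \<mu> \<phi> {y. lo \<le> \<phi> y \<and> \<phi> y \<le> c} \<delta> \<epsilon>"
    and \<delta>: "0 \<le> \<delta>" "\<delta> \<le> 1" and \<epsilon>: "0 < \<epsilon>"
  shows "lo \<le> \<phi> y \<Longrightarrow> c - real k * \<epsilon> < \<phi> y \<Longrightarrow> h y \<le> (1 - \<delta> ^ k) * H"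
proof (induction k arbitrary: y)
  case 0
  then show ?case using vanish by simp
next
  case (Suc k)
  have H: "0 \<le> H"
    using nonneg bound order_trans by blast
  have \<delta>k: "0 \<le> \<delta> ^ k" "\<delta> ^ Suc k \<le> 1"
    using \<delta> power_le_one[of \<delta> "Suc k"] by simp_all
  show ?case
  proof (cases "\<phi> y \<le> c")
    case False
    then show ?thesis using vanish H \<delta>k by simp
  next
    case True
    obtain f where f: "f \<in> set_pmf \<mu>" "\<delta> \<le> pmf \<mu> f" "\<phi> y + \<epsilon> < \<phi> (f y)"
      using push Suc.prems(1) True by (auto simp: uniform_push_def)
    have "h (f y) \<le> (1 - \<delta> ^ k) * H"
      using Suc.prems f(3) \<epsilon> by (intro Suc.IH) (auto simp: algebra_simps)
    then have "h y \<le> H - (H - (1 - \<delta> ^ k) * H) * pmf \<mu> f"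
      using subharmonic[OF True] nonneg bound
        integral_pmf_le_point[of "\<lambda>g. h (g y)" H f "(1 - \<delta> ^ k) * H" \<mu>]
      by fastforce
    also have "\<dots> \<le> H - \<delta> ^ k * H * \<delta>"
      using mult_left_mono[OF f(2), of "\<delta> ^ k * H"] H \<delta>k by (simp add: algebra_simps)
    finally show ?thesis
      by (simp add: algebra_simps)
  qed
qed

end

text \<open>
  \<open>D k y\<close> stands for the probability of the trap event together with no visit to the window
  \<open>lo \<le> \<phi>\<close> before time \<open>k\<close>; this decomposition replaces the strong Markov property.
\<close>
locale window_recurrence = subharmonic_trap +
  fixes lo :: real and D :: "nat \<Rightarrow> 'a \<Rightarrow> real"
  assumes late_nonneg: "0 \<le> D k y"
    and late_le_1: "D k y \<le> 1"
    and late_0: "D 0 y = h y"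
    and late_Suc: "\<phi> y \<le> c \<Longrightarrow> \<phi> y < lo \<Longrightarrow> D (Suc k) y = (\<integral>g. D k (g y) \<partial>\<mu>)"
    and late_tendsto_0: "(\<lambda>k. D k y) \<longlonglongrightarrow> 0"
begin

lemma bound_from_window:
  assumes window: "\<And>y. lo \<le> \<phi> y \<Longrightarrow> \<phi> y \<le> c \<Longrightarrow> h y \<le> t" and "0 \<le> t"
  shows "h y \<le> t"
proof -
  have "h y \<le> t + D k y" for k y
  proof (induction k arbitrary: y)
    case 0
    show ?case using late_0 \<open>0 \<le> t\<close> by simp
  next
    case (Suc k)
    consider "c < \<phi> y" | "lo \<le> \<phi> y" "\<phi> y \<le> c" | "\<phi> y \<le> c" "\<phi> y < lo"
      by linarith
    then show ?case
    proof cases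
      case 1
      then show ?thesis using vanish \<open>0 \<le> t\<close> late_nonneg[of "Suc k" y] by simp
    next
      case 2
      then show ?thesis using window late_nonneg[of "Suc k" y] by fastforce
    next
      case 3
      have "h y \<le> (\<integral>g. h (g y) \<partial>\<mu>)"
        using 3 by (intro subharmonic)
      also have "\<dots> \<le> (\<integral>g. t + D k (g y) \<partial>\<mu>)"
        using nonneg le_1 late_nonneg late_le_1 Suc.IH \<open>0 \<le> t\<close>
        by (intro integral_mono integrable_pmf_bounded[where B=1]
            integrable_pmf_bounded[where B="t + 1"]) (auto intro: add_nonneg_nonneg)
      also have "\<dots> = t + D (Suc k) y"
        using 3 late_nonneg late_le_1
        by (simp add: late_Suc integrable_pmf_bounded[where B=1])
      finally show ?thesis .
    qed
  qed
  moreover have "(\<lambda>k. t + D k y) \<longlonglongrightarrow> t + 0"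
    by (intro tendsto_add tendsto_const late_tendsto_0)
  ultimately show ?thesis
    by (intro LIMSEQ_le_const) auto
qed

lemma h_eq_0:
  assumes push: "uniform_push \<mu> \<phi> {y. lo \<le> \<phi> y \<and> \<phi> y \<le> c} \<delta> \<epsilon>"
    and \<delta>: "0 < \<delta>" "\<delta> \<le> 1" and \<epsilon>: "0 < \<epsilon>"
  shows "h y = 0"
proof -
  define H where "H = (SUP y. h y)"
  have "bdd_above (range h)"
    using le_1 by (intro bdd_aboveI[where M=1]) auto
  then have h_le_H: "h z \<le> H" for z
    unfolding H_def by (intro cSUP_upper) auto
  have "0 \<le> H"
    using nonneg h_le_H order_trans by blast
  obtain N :: nat where "(c - lo) / \<epsilon> < N"
    using reals_Archimedean2 by blast
  then have N: "c - real N * \<epsilon> < lo"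
    using \<epsilon> by (simp add: field_simps)
  have window: "h z \<le> (1 - \<delta> ^ N) * H" if "lo \<le> \<phi> z" "\<phi> z \<le> c" for z
    using \<delta>(1) that N by (intro pushed_bound[OF h_le_H push _ \<delta>(2) \<epsilon>]) auto
  have "0 \<le> (1 - \<delta> ^ N) * H"
    using \<open>0 \<le> H\<close> \<delta> power_le_one[of \<delta> N] by simp
  with window have "h z \<le> (1 - \<delta> ^ N) * H" for z
    by (rule bound_from_window)
  then have "H \<le> (1 - \<delta> ^ N) * H"
    unfolding H_def by (intro cSUP_least) auto
  then have "\<delta> ^ N * H \<le> 0"
    by (simp add: algebra_simps)
  with zero_less_power[OF \<delta>(1), of N] have "H \<le> 0"
    by (simp add: mult_le_0_iff)
  then show ?thesis
    using nonneg[of y] h_le_H[of y] by simp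
qed

end

lemma ex_uniform_push:
  fixes \<phi> :: "'a::topological_space \<Rightarrow> real" and \<mu> :: "('a \<Rightarrow> 'a) pmf"
  assumes K: "compact K"
    and \<phi>: "continuous_on UNIV \<phi>"
    and maps: "\<And>f. f \<in> set_pmf \<mu> \<Longrightarrow> continuous_on UNIV f"
    and push: "\<And>y. y \<in> K \<Longrightarrow> \<exists>f\<in>set_pmf \<mu>. \<phi> y < \<phi> (f y)"
  shows "\<exists>\<delta>>0. \<delta> \<le> 1 \<and> (\<exists>\<epsilon>>0. uniform_push \<mu> \<phi> K \<delta> \<epsilon>)"
proof -
  define U where "U p = {y. \<phi> y + inverse (real (snd p)) < \<phi> (fst p y)}"
    for p :: "('a \<Rightarrow> 'a) \<times> nat"
  have "open (U p)" if "p \<in> set_pmf \<mu> \<times> {0<..}" for p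
    unfolding U_def using that
    by (intro open_Collect_less continuous_intros \<phi> continuous_on_compose2[OF \<phi> maps]) auto
  moreover have "K \<subseteq> (\<Union>p\<in>set_pmf \<mu> \<times> {0<..}. U p)"
  proof
    fix y assume "y \<in> K"
    then obtain f where f: "f \<in> set_pmf \<mu>" "\<phi> y < \<phi> (f y)"
      using push by blast
    then obtain m :: nat where "0 < m" "inverse (real m) < \<phi> (f y) - \<phi> y"
      using ex_inverse_of_nat_less[of "\<phi> (f y) - \<phi> y"] by auto
    with f show "y \<in> (\<Union>p\<in>set_pmf \<mu> \<times> {0<..}. U p)"
      unfolding U_def by (intro UN_I[of "(f, m)"]) auto
  qed
  ultimately obtain P where P: "P \<subseteq> set_pmf \<mu> \<times> {0<..}" "finite P" "K \<subseteq> (\<Union>p\<in>P. U p)"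
    using compactE_image[OF K] by metis
  show ?thesis
  proof (cases "P = {}")
    case True
    with P have "K = {}" by auto
    then show ?thesis
      by (intro exI[of _ "1::real"] conjI) (auto simp: uniform_push_def)
  next
    case False
    define \<delta> where "\<delta> = Min ((\<lambda>p. pmf \<mu> (fst p)) ` P)"
    define \<epsilon> where "\<epsilon> = Min ((\<lambda>p. inverse (real (snd p))) ` P)"
    have "0 < \<delta>"
      unfolding \<delta>_def using P False
      by (subst Min_gr_iff) (auto simp: set_pmf_iff pmf_nonneg order_le_less)
    moreover have "0 < \<epsilon>"
      unfolding \<epsilon>_def using P False by (subst Min_gr_iff) auto
    moreover obtain p where "p \<in> P" using False by blast
    then have "\<delta> \<le> 1"
      unfolding \<delta>_def using P by (meson Min_le finite_imageI image_eqI order_trans pmf_le_1)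
    moreover have "uniform_push \<mu> \<phi> K \<delta> \<epsilon>"
      unfolding uniform_push_def
    proof
      fix y assume "y \<in> K"
      with P obtain p where p: "p \<in> P" "y \<in> U p" by blast
      have "\<delta> \<le> pmf \<mu> (fst p)" "\<epsilon> \<le> inverse (real (snd p))"
        unfolding \<delta>_def \<epsilon>_def using P p by (auto intro: Min_le)
      with P p show "\<exists>f\<in>set_pmf \<mu>. \<delta> \<le> pmf \<mu> f \<and> \<phi> y + \<epsilon> < \<phi> (f y)"
        unfolding U_def by (intro bexI[of _ "fst p"]) auto
    qed
    ultimately show ?thesis by blast
  qed
qed

section \<open>The clipped walk\<close>

lemma fold_comp_id:
  fixes u :: "'a \<Rightarrow> 'a"
  shows "fold (\<lambda>g h. g \<circ> h) gs u = fold (\<lambda>g h. g \<circ> h) gs id \<circ> u"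
proof (induction gs arbitrary: u)
  case (Cons g gs)
  show ?case by (simp only: fold_simps(2) comp_id Cons.IH[of "g \<circ> u"] Cons.IH[of g] comp_assoc)
qed simp

lemma walk_0 [simp]: "walk 0 \<omega> = id"
  by (simp add: walk_def)

lemma walk_Suc: "walk (Suc n) \<omega> = walk n (stl \<omega>) \<circ> shd \<omega>"
  unfolding walk_def by (simp add: fold_comp_id[of _ "shd \<omega>"])

text \<open>
  Replacing maps outside the countable support by the identity makes the walk measurable
  on the path space, and almost surely changes nothing.
\<close>
definition clip :: "(real \<Rightarrow> real) pmf \<Rightarrow> (real \<Rightarrow> real) \<Rightarrow> real \<Rightarrow> real" where
  "clip \<mu> g = (if g \<in> set_pmf \<mu> then g else id)"

definition cwalk :: "(real \<Rightarrow> real) pmf \<Rightarrow> nat \<Rightarrow> (real \<Rightarrow> real) stream \<Rightarrow> real \<Rightarrow> real" where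
  "cwalk \<mu> n \<omega> = walk n (smap (clip \<mu>) \<omega>)"

abbreviation paths :: "(real \<Rightarrow> real) pmf \<Rightarrow> (real \<Rightarrow> real) stream measure" where
  "paths \<mu> \<equiv> stream_space (measure_pmf \<mu>)"

lemma prob_space_paths: "prob_space (paths \<mu>)"
  by (rule prob_space.prob_space_stream_space[OF prob_space_measure_pmf])

lemma cwalk_0 [simp]: "cwalk \<mu> 0 \<omega> y = y"
  by (simp add: cwalk_def)

lemma cwalk_Suc: "cwalk \<mu> (Suc n) \<omega> y = cwalk \<mu> n (stl \<omega>) (clip \<mu> (shd \<omega>) y)"
  by (simp add: cwalk_def walk_Suc)

lemma cwalk_Cons [simp]: "cwalk \<mu> (Suc n) (g ## \<omega>) y = cwalk \<mu> n \<omega> (clip \<mu> g y)"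
  by (simp add: cwalk_Suc)

lemma cwalk_eq_walk: "\<omega> \<in> streams (set_pmf \<mu>) \<Longrightarrow> cwalk \<mu> n \<omega> = walk n \<omega>"
proof -
  assume "\<omega> \<in> streams (set_pmf \<mu>)"
  then have "smap (clip \<mu>) \<omega> = \<omega>"
    by (intro stream.map_ident_strong) (auto simp: clip_def streams_iff_sset)
  then show ?thesis by (simp add: cwalk_def)
qed

lemma measurable_cwalk:
  "(\<lambda>\<omega>. cwalk \<mu> n \<omega> y) \<in> borel_measurable (paths \<mu>)"
proof (induction n arbitrary: y)
  case 0
  then show ?case by simp
next
  case (Suc n)
  have "(\<lambda>\<omega>. cwalk \<mu> n (stl \<omega>) (clip \<mu> (shd \<omega>) y)) \<in> borel_measurable (paths \<mu>)"
  proof (rule measurable_compose_countable'[where f="\<lambda>g \<omega>. cwalk \<mu> n (stl \<omega>) (g y)"])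
    show "(\<lambda>\<omega>. cwalk \<mu> n (stl \<omega>) (g y)) \<in> borel_measurable (paths \<mu>)" for g
      using measurable_compose[OF measurable_stl Suc.IH] by simp
    show "(\<lambda>\<omega>. clip \<mu> (shd \<omega>)) \<in> paths \<mu> \<rightarrow>\<^sub>M count_space (range (clip \<mu>))"
      by (rule measurable_compose[OF measurable_shd]) simp
    show "countable (range (clip \<mu>))"
      by (rule countable_subset[of _ "insert id (set_pmf \<mu>)"]) (auto simp: clip_def)
  qed
  then show ?case by (simp only: cwalk_Suc)
qed

section \<open>Trap events\<close>

definition trap_event ::
    "(real \<Rightarrow> real) pmf \<Rightarrow> (real \<Rightarrow> real) \<Rightarrow> real \<Rightarrow> real \<Rightarrow> nat \<Rightarrow> real \<Rightarrow> (real \<Rightarrow> real) stream set"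
  where "trap_event \<mu> \<phi> lo c m y =
    {\<omega>. (\<forall>n\<ge>m. \<phi> (cwalk \<mu> n \<omega> y) \<le> c) \<and> (\<exists>\<^sub>\<infinity>n. lo \<le> \<phi> (cwalk \<mu> n \<omega> y))}"

definition late_trap_event ::
    "(real \<Rightarrow> real) pmf \<Rightarrow> (real \<Rightarrow> real) \<Rightarrow> real \<Rightarrow> real \<Rightarrow> nat \<Rightarrow> real \<Rightarrow> (real \<Rightarrow> real) stream set"
  where "late_trap_event \<mu> \<phi> lo c k y =
    {\<omega> \<in> trap_event \<mu> \<phi> lo c 0 y. \<forall>n<k. \<phi> (cwalk \<mu> n \<omega> y) < lo}"

lemma sets_cwalk_compare:
  fixes \<phi> :: "real \<Rightarrow> real"
  assumes "\<phi> \<in> borel_measurable borel"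
  shows "{\<omega>. \<phi> (cwalk \<mu> n \<omega> y) \<le> c} \<in> sets (paths \<mu>)"
    and "{\<omega>. lo \<le> \<phi> (cwalk \<mu> n \<omega> y)} \<in> sets (paths \<mu>)"
proof -
  have f: "(\<lambda>\<omega>. \<phi> (cwalk \<mu> n \<omega> y)) \<in> borel_measurable (paths \<mu>)"
    using measurable_compose[OF measurable_cwalk assms] .
  show "{\<omega>. \<phi> (cwalk \<mu> n \<omega> y) \<le> c} \<in> sets (paths \<mu>)"
    using borel_measurable_le[OF f borel_measurable_const[of c]] by (simp add: space_stream_space)
  show "{\<omega>. lo \<le> \<phi> (cwalk \<mu> n \<omega> y)} \<in> sets (paths \<mu>)"
    using borel_measurable_le[OF borel_measurable_const[of lo] f] by (simp add: space_stream_space)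
qed

lemma sets_trap_event:
  assumes "\<phi> \<in> borel_measurable borel"
  shows "trap_event \<mu> \<phi> lo c m y \<in> sets (paths \<mu>)"
proof -
  have "trap_event \<mu> \<phi> lo c m y = (\<Inter>n\<in>{m..}. {\<omega>. \<phi> (cwalk \<mu> n \<omega> y) \<le> c}) \<inter>
      (\<Inter>k. \<Union>n\<in>{k..}. {\<omega>. lo \<le> \<phi> (cwalk \<mu> n \<omega> y)})"
    by (auto simp: trap_event_def INFM_nat_le)
  also have "\<dots> \<in> sets (paths \<mu>)"
    using sets_cwalk_compare[OF assms]
    by (intro sets.Int sets.countable_INT' sets.countable_UN') auto
  finally show ?thesis .
qed

lemma sets_late_trap_event:
  assumes "\<phi> \<in> borel_measurable borel"
  shows "late_trap_event \<mu> \<phi> lo c k y \<in> sets (paths \<mu>)"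
proof -
  have "late_trap_event \<mu> \<phi> lo c k y =
      trap_event \<mu> \<phi> lo c 0 y - (\<Union>n\<in>{..<k}. {\<omega>. lo \<le> \<phi> (cwalk \<mu> n \<omega> y)})"
    by (auto simp: late_trap_event_def not_le)
  also have "\<dots> \<in> sets (paths \<mu>)"
    using sets_trap_event[OF assms] sets_cwalk_compare[OF assms]
    by (intro sets.Diff sets.countable_UN') auto
  finally show ?thesis .
qed

lemma INFM_cwalk_Cons_iff:
  "(\<exists>\<^sub>\<infinity>n. P (cwalk \<mu> n (g ## \<omega>) y)) \<longleftrightarrow> (\<exists>\<^sub>\<infinity>n. P (cwalk \<mu> n \<omega> (clip \<mu> g y)))"
  using INFM_Suc_iff[of "\<lambda>n. P (cwalk \<mu> n (g ## \<omega>) y)"] by (simp only: cwalk_Cons)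

lemma Cons_in_trap_event_0_iff:
  "g ## \<omega> \<in> trap_event \<mu> \<phi> lo c 0 y \<longleftrightarrow> \<phi> y \<le> c \<and> \<omega> \<in> trap_event \<mu> \<phi> lo c 0 (clip \<mu> g y)"
proof -
  have "(\<forall>n. \<phi> (cwalk \<mu> n (g ## \<omega>) y) \<le> c) \<longleftrightarrow> \<phi> y \<le> c \<and> (\<forall>n. \<phi> (cwalk \<mu> n \<omega> (clip \<mu> g y)) \<le> c)"
    using all_nat_iff_0_Suc[of "\<lambda>n. \<phi> (cwalk \<mu> n (g ## \<omega>) y) \<le> c"]
    by (simp only: cwalk_0 cwalk_Cons)
  then show ?thesis
    by (simp add: trap_event_def INFM_cwalk_Cons_iff[where P="\<lambda>z. lo \<le> \<phi> z"])
qed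

lemma Cons_in_trap_event_Suc_iff:
  "g ## \<omega> \<in> trap_event \<mu> \<phi> lo c (Suc m) y \<longleftrightarrow> \<omega> \<in> trap_event \<mu> \<phi> lo c m (clip \<mu> g y)"
proof -
  have "(\<forall>n\<ge>Suc m. \<phi> (cwalk \<mu> n (g ## \<omega>) y) \<le> c) \<longleftrightarrow> (\<forall>n\<ge>m. \<phi> (cwalk \<mu> n \<omega> (clip \<mu> g y)) \<le> c)"
    using all_ge_Suc_iff[of m "\<lambda>n. \<phi> (cwalk \<mu> n (g ## \<omega>) y) \<le> c"]
    by (simp only: cwalk_Cons)
  then show ?thesis
    by (simp add: trap_event_def INFM_cwalk_Cons_iff[where P="\<lambda>z. lo \<le> \<phi> z"])
qed

lemma Cons_in_late_trap_event_Suc_iff: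
  "g ## \<omega> \<in> late_trap_event \<mu> \<phi> lo c (Suc k) y \<longleftrightarrow>
     \<phi> y \<le> c \<and> \<phi> y < lo \<and> \<omega> \<in> late_trap_event \<mu> \<phi> lo c k (clip \<mu> g y)"
  by (auto simp: late_trap_event_def Cons_in_trap_event_0_iff All_less_Suc2)

lemma integral_clip:
  fixes \<mu> :: "(real \<Rightarrow> real) pmf"
  shows "(\<integral>g. F (clip \<mu> g) \<partial>\<mu>) = (\<integral>g. F g \<partial>\<mu>)"
  by (rule integral_cong_AE) (auto simp: clip_def AE_measure_pmf_iff)

lemma measure_trap_event_0:
  assumes "\<phi> \<in> borel_measurable borel"
  shows "measure (paths \<mu>) (trap_event \<mu> \<phi> lo c 0 y) =
    (if \<phi> y \<le> c then \<integral>g. measure (paths \<mu>) (trap_event \<mu> \<phi> lo c 0 (g y)) \<partial>\<mu> else 0)"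
  using integral_clip[where F="\<lambda>g. measure (paths \<mu>) (trap_event \<mu> \<phi> lo c 0 (g y))"]
  by (simp add: measure_stream_space_Cons[OF sets_trap_event[OF assms]] Cons_in_trap_event_0_iff)

lemma measure_trap_event_Suc:
  assumes "\<phi> \<in> borel_measurable borel"
  shows "measure (paths \<mu>) (trap_event \<mu> \<phi> lo c (Suc m) y) =
    (\<integral>g. measure (paths \<mu>) (trap_event \<mu> \<phi> lo c m (g y)) \<partial>\<mu>)"
  using integral_clip[where F="\<lambda>g. measure (paths \<mu>) (trap_event \<mu> \<phi> lo c m (g y))"]
  by (simp add: measure_stream_space_Cons[OF sets_trap_event[OF assms]] Cons_in_trap_event_Suc_iff)

lemma measure_late_trap_event_Suc:
  assumes "\<phi> \<in> borel_measurable borel" and "\<phi> y \<le> c" and "\<phi> y < lo"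
  shows "measure (paths \<mu>) (late_trap_event \<mu> \<phi> lo c (Suc k) y) =
    (\<integral>g. measure (paths \<mu>) (late_trap_event \<mu> \<phi> lo c k (g y)) \<partial>\<mu>)"
  using integral_clip[where F="\<lambda>g. measure (paths \<mu>) (late_trap_event \<mu> \<phi> lo c k (g y))"] assms(2,3)
  by (simp add: measure_stream_space_Cons[OF sets_late_trap_event[OF assms(1)]]
      Cons_in_late_trap_event_Suc_iff)

lemma measure_late_trap_event_tendsto_0:
  assumes "\<phi> \<in> borel_measurable borel"
  shows "(\<lambda>k. measure (paths \<mu>) (late_trap_event \<mu> \<phi> lo c k y)) \<longlonglongrightarrow> 0"
proof -
  interpret S: prob_space "paths \<mu>"
    by (rule prob_space_paths)
  have "\<omega> \<notin> (\<Inter>k. late_trap_event \<mu> \<phi> lo c k y)" for \<omega>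
  proof
    assume "\<omega> \<in> (\<Inter>k. late_trap_event \<mu> \<phi> lo c k y)"
    then have late: "\<omega> \<in> late_trap_event \<mu> \<phi> lo c k y" for k
      by blast
    obtain n where "lo \<le> \<phi> (cwalk \<mu> n \<omega> y)"
      using late[of 0] by (auto simp: late_trap_event_def trap_event_def dest: INFM_EX)
    with late[of "Suc n"] show False
      by (auto simp: late_trap_event_def)
  qed
  then have "(\<Inter>k. late_trap_event \<mu> \<phi> lo c k y) = {}"
    by blast
  moreover have "decseq (\<lambda>k. late_trap_event \<mu> \<phi> lo c k y)"
    by (auto simp: decseq_def late_trap_event_def)
  moreover have "range (\<lambda>k. late_trap_event \<mu> \<phi> lo c k y) \<subseteq> S.events"
    using sets_late_trap_event[OF assms] by blast
  ultimately show ?thesis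
    using S.finite_Lim_measure_decseq[of "\<lambda>k. late_trap_event \<mu> \<phi> lo c k y"] by simp
qed

lemma measure_trap_event_eq_0:
  assumes maps: "\<And>f. f \<in> set_pmf \<mu> \<Longrightarrow> continuous_on UNIV f"
    and \<phi>: "continuous_on UNIV \<phi>"
    and window: "compact {y. lo \<le> \<phi> y \<and> \<phi> y \<le> c}"
    and push: "\<And>y. \<exists>f\<in>set_pmf \<mu>. \<phi> y < \<phi> (f y)"
  shows "measure (paths \<mu>) (trap_event \<mu> \<phi> lo c m y) = 0"
proof -
  interpret S: prob_space "paths \<mu>"
    by (rule prob_space_paths)
  have borel: "\<phi> \<in> borel_measurable borel"
    using \<phi> by (rule borel_measurable_continuous_onI)
  show ?thesis
  proof (induction m arbitrary: y)
    case 0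
    obtain \<delta> \<epsilon> where \<delta>: "0 < \<delta>" "\<delta> \<le> 1" and \<epsilon>: "0 < \<epsilon>"
      and uniform: "uniform_push \<mu> \<phi> {y. lo \<le> \<phi> y \<and> \<phi> y \<le> c} \<delta> \<epsilon>"
      using ex_uniform_push[OF window \<phi> maps push] by blast
    define h where "h y = measure (paths \<mu>) (trap_event \<mu> \<phi> lo c 0 y)" for y
    define D where "D k y = measure (paths \<mu>) (late_trap_event \<mu> \<phi> lo c k y)" for k y
    interpret window_recurrence \<mu> \<phi> c h lo D
    proof unfold_locales
      fix y :: real and k :: nat
      show "0 \<le> h y" "h y \<le> 1" "0 \<le> D k y" "D k y \<le> 1"
        by (simp_all add: h_def D_def S.prob_le_1)
      show "c < \<phi> y \<Longrightarrow> h y = 0"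
        unfolding h_def by (subst measure_trap_event_0[OF borel]) simp
      show "\<phi> y \<le> c \<Longrightarrow> h y \<le> (\<integral>g. h (g y) \<partial>\<mu>)"
        unfolding h_def by (subst measure_trap_event_0[OF borel]) simp
      show "D 0 y = h y"
        by (simp add: D_def h_def late_trap_event_def)
      show "\<phi> y \<le> c \<Longrightarrow> \<phi> y < lo \<Longrightarrow> D (Suc k) y = (\<integral>g. D k (g y) \<partial>\<mu>)"
        unfolding D_def by (rule measure_late_trap_event_Suc[OF borel])
      show "(\<lambda>k. D k y) \<longlonglongrightarrow> 0"
        unfolding D_def by (rule measure_late_trap_event_tendsto_0[OF borel])
    qed
    have "h y = 0"
      by (rule h_eq_0[OF uniform \<delta> \<epsilon>])
    then show ?case
      by (simp add: h_def)
  next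
    case (Suc m)
    then show ?case
      by (simp add: measure_trap_event_Suc[OF borel])
  qed
qed

section \<open>Infinite limit superior and inferior\<close>

lemma limsup_ereal_infinite:
  fixes r :: "nat \<Rightarrow> real"
  assumes no_trap: "\<And>(lo::int) (c::int) m. \<not> ((\<forall>n\<ge>m. r n \<le> c) \<and> (\<exists>\<^sub>\<infinity>n. lo \<le> r n))"
  shows "limsup (\<lambda>n. ereal (r n)) \<in> {-\<infinity>, \<infinity>}"
proof (rule ccontr)
  assume "limsup (\<lambda>n. ereal (r n)) \<notin> {-\<infinity>, \<infinity>}"
  then obtain L where L: "limsup (\<lambda>n. ereal (r n)) = ereal L"
    by (cases "limsup (\<lambda>n. ereal (r n))") auto
  define k where "k = \<lfloor>L\<rfloor>"
  have "eventually (\<lambda>n. ereal (r n) < ereal (k + 1)) sequentially"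
    using L by (intro Limsup_lessD) (simp add: k_def)
  then obtain m where "\<forall>n\<ge>m. r n \<le> k + 1"
    unfolding eventually_sequentially by force
  moreover have "\<exists>\<^sub>\<infinity>n. k - 1 \<le> r n"
  proof (rule ccontr)
    assume "\<not> (\<exists>\<^sub>\<infinity>n. k - 1 \<le> r n)"
    then have "eventually (\<lambda>n. ereal (r n) \<le> ereal (k - 1)) sequentially"
      by (auto simp: not_frequently cofinite_eq_sequentially elim: eventually_mono)
    then have "limsup (\<lambda>n. ereal (r n)) \<le> ereal (k - 1)"
      by (rule Limsup_bounded)
    with L have "L \<le> real_of_int k - 1"
      by simp
    then show False
      using of_int_floor_le[of L] unfolding k_def by linarith
  qed
  ultimately have "(\<forall>n\<ge>m. r n \<le> of_int (k + 1)) \<and> (\<exists>\<^sub>\<infinity>n. of_int (k - 1) \<le> r n)"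
    by simp
  with no_trap show False
    by blast
qed

lemma liminf_ereal_infinite:
  fixes r :: "nat \<Rightarrow> real"
  assumes "\<And>(lo::int) (c::int) m. \<not> ((\<forall>n\<ge>m. - r n \<le> c) \<and> (\<exists>\<^sub>\<infinity>n. lo \<le> - r n))"
  shows "liminf (\<lambda>n. ereal (r n)) \<in> {-\<infinity>, \<infinity>}"
proof -
  have "liminf (\<lambda>n. ereal (r n)) = - limsup (\<lambda>n. ereal (- r n))"
    using ereal_Liminf_uminus[of sequentially "\<lambda>n. ereal (- r n)"] by simp
  with limsup_ereal_infinite[OF assms] show ?thesis
    by auto
qed

lemma trap_event_null:
  assumes homeo: "\<forall>f\<in>set_pmf \<mu>. homeo_plus f" and "shiftable \<mu>"
    and \<phi>: "\<phi> = (\<lambda>y. y) \<or> \<phi> = uminus"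
  shows "trap_event \<mu> \<phi> lo c m y \<in> null_sets (paths \<mu>)"
proof -
  interpret S: prob_space "paths \<mu>"
    by (rule prob_space_paths)
  have "{y. lo \<le> \<phi> y \<and> \<phi> y \<le> c} \<in> {{lo..c}, {-c..-lo}}"
    using \<phi> by auto
  then have "compact {y. lo \<le> \<phi> y \<and> \<phi> y \<le> c}"
    by auto
  moreover have "\<exists>f\<in>set_pmf \<mu>. \<phi> y < \<phi> (f y)" for y
    using \<open>shiftable \<mu>\<close> \<phi> unfolding shiftable_def by fastforce
  moreover have "continuous_on UNIV f" if "f \<in> set_pmf \<mu>" for f
    using homeo that unfolding homeo_plus_def homeomorphism_def by blast
  moreover have "continuous_on UNIV \<phi>"
    using \<phi> by (auto intro: continuous_intros)
  ultimately have "measure (paths \<mu>) (trap_event \<mu> \<phi> lo c m y) = 0"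
    by (intro measure_trap_event_eq_0)
  moreover have "\<phi> \<in> borel_measurable borel"
    using \<phi> by auto
  ultimately show ?thesis
    by (simp add: S.emeasure_eq_measure null_sets_def sets_trap_event)
qed

theorem lemma1:
  fixes \<mu> :: "(real \<Rightarrow> real) pmf"
  assumes "\<forall>f\<in>set_pmf \<mu>. homeo_plus f"
    and "shiftable \<mu>"
  shows "\<forall>x::real. AE \<omega> in stream_space (measure_pmf \<mu>).
           limsup (\<lambda>n. ereal (walk n \<omega> x)) \<in> {-\<infinity>, \<infinity>} \<and>
           liminf (\<lambda>n. ereal (walk n \<omega> x)) \<in> {-\<infinity>, \<infinity>}"
proof
  fix x :: real
  have "AE \<omega> in paths \<mu>. \<forall>lo::int. \<forall>c::int. \<forall>m. \<omega> \<notin> trap_event \<mu> (\<lambda>y. y) lo c m x"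
    using trap_event_null[OF assms] by (simp add: AE_all_countable AE_not_in)
  moreover have "AE \<omega> in paths \<mu>. \<forall>lo::int. \<forall>c::int. \<forall>m. \<omega> \<notin> trap_event \<mu> uminus lo c m x"
    using trap_event_null[OF assms] by (simp add: AE_all_countable AE_not_in)
  moreover have "AE \<omega> in paths \<mu>. \<omega> \<in> streams (set_pmf \<mu>)"
    using prob_space.AE_stream_all[OF prob_space_measure_pmf, of "\<lambda>g. g \<in> set_pmf \<mu>" \<mu>]
    by (simp add: AE_measure_pmf stream_all_iff streams_iff_sset subset_eq)
  ultimately show "AE \<omega> in stream_space (measure_pmf \<mu>).
           limsup (\<lambda>n. ereal (walk n \<omega> x)) \<in> {-\<infinity>, \<infinity>} \<and>
           liminf (\<lambda>n. ereal (walk n \<omega> x)) \<in> {-\<infinity>, \<infinity>}"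
  proof eventually_elim
    case (elim \<omega>)
    then show ?case
      by (intro conjI limsup_ereal_infinite liminf_ereal_infinite)
        (auto simp: trap_event_def cwalk_eq_walk)
  qed
qed

end
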